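(* Let $\alpha\in(0,1]$ and let $d\ge 144/\alpha^2$. Let $G$ be a bipartite $d$-regular graph with parts $V_1,V_2$, $|V_1|=|V_2|=n$, such that for all nonempty $A\subseteq V_1$ and $B\subseteq V_2$, $\bigl|e(A,B)-\tfrac{d}{n}|A||B|\bigr|<\lambda\sqrt{|A||B|}$ with $\lambda=2\sqrt{d-1}$. Suppose $U\subseteq V_1$ and $W\subseteq V_2$ satisfy $|U|=|W|=\alpha n$, $\deg(w,U)\ge\alpha d/3$ for every $w\in W$ and $\deg(u,W)\ge\alpha d/3$ for every $u\in U$. Then $G[U,W]$ contains a perfect matching.
   Context: $e(A,B)$ is the number of edges between $A$ and $B$; $\deg(v,S)$ is the number of neighbours of $v$ in $S$; $G[U,W]$ is the bipartite subgraph of $G$ induced between $U$ and $W$. *)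

theory Defs
  imports Complex_Main
begin

definition edges_between :: "('a \<Rightarrow> 'a \<Rightarrow> bool) \<Rightarrow> 'a set \<Rightarrow> 'a set \<Rightarrow> nat" where
  "edges_between E A B = card {(a, b). a \<in> A \<and> b \<in> B \<and> E a b}"

definition deg_in :: "('a \<Rightarrow> 'a \<Rightarrow> bool) \<Rightarrow> 'a \<Rightarrow> 'a set \<Rightarrow> nat" where
  "deg_in E v S = card {u \<in> S. E v u}"

definition bipartite_regular :: "('a \<Rightarrow> 'a \<Rightarrow> bool) \<Rightarrow> 'a set \<Rightarrow> 'a set \<Rightarrow> nat \<Rightarrow> bool" where
  "bipartite_regular E V1 V2 d \<longleftrightarrow>
     finite V1 \<and> finite V2 \<and> V1 \<inter> V2 = {} \<and>
     (\<forall>x y. E x y \<longrightarrow> E y x) \<and>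
     (\<forall>x y. E x y \<longrightarrow> (x \<in> V1 \<and> y \<in> V2) \<or> (x \<in> V2 \<and> y \<in> V1)) \<and>
     (\<forall>v \<in> V1 \<union> V2. deg_in E v (V1 \<union> V2) = d)"

definition has_perfect_matching :: "('a \<Rightarrow> 'a \<Rightarrow> bool) \<Rightarrow> 'a set \<Rightarrow> 'a set \<Rightarrow> bool" where
  "has_perfect_matching E U W \<longleftrightarrow>
     (\<exists>M. M \<subseteq> {(u, w). u \<in> U \<and> w \<in> W \<and> E u w} \<and>
          (\<forall>u \<in> U. \<exists>!w. (u, w) \<in> M) \<and>
          (\<forall>w \<in> W. \<exists>!u. (u, w) \<in> M))"

end

theory Submission
  imports Defs
begin

text \<open>By Hall's theorem it suffices that every \<open>S \<subseteq> U\<close> has at least \<open>|S|\<close> neighbours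
  in \<open>W\<close>. Suppose the neighbourhood \<open>N\<close> of \<open>S\<close> in \<open>W\<close> is smaller. If \<open>|S| \<le> \<alpha>n/6\<close>, the at least
  \<open>|S|\<alpha>d/3\<close> edges from \<open>S\<close> into the even smaller set \<open>N\<close> exceed the mixing bound
  \<open>d|S||N|/n + \<lambda>\<surd>(|S||N|) \<le> |S|\<alpha>d/3\<close>. If \<open>|W - N| \<le> \<alpha>n/6\<close>, the same argument applies to
  \<open>W - N\<close> and the even smaller set \<open>U - S\<close>, which receives all edges from \<open>W - N\<close> into \<open>U\<close>.
  Otherwise \<open>S\<close> and \<open>W - N\<close> both have more than \<open>\<alpha>n/6\<close> vertices, and the mixing bound forces an
  edge between them, although \<open>W - N\<close> contains no neighbour of \<open>S\<close>. The hypothesis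
  \<open>d \<ge> 144/\<alpha>\<^sup>2\<close> is exactly what gives \<open>\<lambda> = 2\<surd>(d - 1) \<le> \<alpha>d/6\<close>.\<close>

lemma sdr_combine:
  assumes K: "K \<subseteq> I"
    and f: "inj_on f K" "\<forall>i\<in>K. f i \<in> A i" "f ` K \<subseteq> X"
    and g: "inj_on g (I - K)" "\<forall>i\<in>I - K. g i \<in> A i - X"
  shows "\<exists>h. inj_on h I \<and> (\<forall>i\<in>I. h i \<in> A i)"
proof -
  define h where "h i = (if i \<in> K then f i else g i)" for i
  have "f ` K \<inter> g ` (I - K) = {}" using f(3) g(2) by fastforce
  then have "inj_on h (K \<union> (I - K))"
    unfolding h_def using f(1) g(1) inj_on_disjoint_Un by blast
  moreover have "K \<union> (I - K) = I" using K by auto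
  moreover have "\<forall>i\<in>I. h i \<in> A i" using f(2) g(2) by (simp add: h_def)
  ultimately show ?thesis by metis
qed

lemma hall_condition_remove_tight:
  assumes hall: "\<forall>J\<subseteq>I. card J \<le> card (\<Union>(A ` J))"
    and fin: "finite I" "\<forall>i\<in>I. finite (A i)"
    and K: "K \<subseteq> I" "card (\<Union>(A ` K)) = card K"
  shows "\<forall>J\<subseteq>I - K. card J \<le> card (\<Union>i\<in>J. A i - \<Union>(A ` K))"
proof (intro allI impI)
  fix J assume J: "J \<subseteq> I - K"
  have fin_JK: "finite J" "finite K" using J K(1) fin(1) finite_subset by blast+
  moreover have "\<forall>i\<in>J. finite (A i)" "\<forall>i\<in>K. finite (A i)" using J K(1) fin(2) by blast+
  ultimately have fin_UN: "finite (\<Union>(A ` J))" "finite (\<Union>(A ` K))" by simp_all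
  have "J \<union> K \<subseteq> I" using J K(1) by blast
  have "card J + card K = card (J \<union> K)" using fin_JK J by (subst card_Un_disjoint) auto
  also have "\<dots> \<le> card (\<Union>(A ` (J \<union> K)))" by (rule hall[rule_format, OF \<open>J \<union> K \<subseteq> I\<close>])
  also have "\<dots> = card ((\<Union>(A ` J) - \<Union>(A ` K)) \<union> \<Union>(A ` K))"
    by (rule arg_cong[where f = card]) blast
  also have "\<dots> = card (\<Union>(A ` J) - \<Union>(A ` K)) + card K"
    using fin_UN K(2) by (subst card_Un_disjoint) auto
  finally have "card J \<le> card (\<Union>(A ` J) - \<Union>(A ` K))" by simp
  also have "\<dots> = card (\<Union>i\<in>J. A i - \<Union>(A ` K))"
    by (rule arg_cong[where f = card]) blast
  finally show "card J \<le> card (\<Union>i\<in>J. A i - \<Union>(A ` K))" .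
qed

lemma hall_condition_remove_point:
  assumes slack: "\<And>J. J \<subseteq> I \<Longrightarrow> J \<noteq> {} \<Longrightarrow> J \<noteq> I \<Longrightarrow> card J < card (\<Union>(A ` J))"
    and i: "i \<in> I"
  shows "\<forall>J\<subseteq>I - {i}. card J \<le> card (\<Union>j\<in>J. A j - {x})"
proof (intro allI impI)
  fix J assume J: "J \<subseteq> I - {i}"
  show "card J \<le> card (\<Union>j\<in>J. A j - {x})"
  proof (cases "J = {}")
    case False
    have "J \<subseteq> I" "J \<noteq> I" using J i by auto
    then have "card J < card (\<Union>(A ` J))" using slack False by simp
    moreover have "card (\<Union>(A ` J)) - 1 \<le> card (\<Union>(A ` J) - {x})"
      using diff_card_le_card_Diff[of "{x}"] by simp
    ultimately have "card J \<le> card (\<Union>(A ` J) - {x})" by linarith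
    also have "\<Union>(A ` J) - {x} = (\<Union>j\<in>J. A j - {x})" by blast
    finally show ?thesis .
  qed simp
qed

text \<open>Halmos--Vaughan: either some nonempty proper subfamily \<open>K\<close> is tight, and one matches
  \<open>K\<close> and \<open>I - K\<close> separately (the latter avoiding the points used by \<open>K\<close>); or every such
  subfamily has slack, and one can fix any representative for one index and recurse.\<close>

theorem hall_marriage:
  assumes "finite I" "\<forall>i\<in>I. finite (A i)" "\<forall>J\<subseteq>I. card J \<le> card (\<Union>(A ` J))"
  shows "\<exists>f. inj_on f I \<and> (\<forall>i\<in>I. f i \<in> A i)"
  using assms
proof (induction "card I" arbitrary: I A rule: less_induct)
  case less
  note fin = less.prems(1,2) and hall = less.prems(3)
  show ?case
  proof (cases "\<exists>K. K \<subseteq> I \<and> K \<noteq> {} \<and> K \<noteq> I \<and> card (\<Union>(A ` K)) = card K")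
    case True
    then obtain K where K: "K \<subseteq> I" "K \<noteq> {}" "K \<noteq> I" "card (\<Union>(A ` K)) = card K" by blast
    have fin_K: "finite K" using K(1) fin(1) finite_subset by blast
    have "K \<subset> I" "I - K \<subset> I" using K(1,2,3) by blast+
    then have card_lt: "card K < card I" "card (I - K) < card I"
      using psubset_card_mono[OF fin(1)] by blast+
    have "\<forall>i\<in>K. finite (A i)" using K(1) fin(2) by blast
    moreover have "\<forall>J\<subseteq>K. card J \<le> card (\<Union>(A ` J))" using K(1) hall by (auto dest: subset_trans)
    ultimately obtain f where f: "inj_on f K" "\<forall>i\<in>K. f i \<in> A i"
      using less.hyps[OF card_lt(1) fin_K] by blast
    have "\<forall>i\<in>I - K. finite (A i - \<Union>(A ` K))" using fin(2) by blast
    then obtain g where "inj_on g (I - K)" "\<forall>i\<in>I - K. g i \<in> A i - \<Union>(A ` K)"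
      using less.hyps[OF card_lt(2) _ _ hall_condition_remove_tight[OF hall fin K(1,4)]] fin(1) by blast
    with f show ?thesis using K(1) by (intro sdr_combine[where X = "\<Union>(A ` K)"]) auto
  next
    case no_tight_set: False
    show ?thesis
    proof (cases "I = {}")
      case False
      have slack: "card J < card (\<Union>(A ` J))" if "J \<subseteq> I" "J \<noteq> {}" "J \<noteq> I" for J
      proof -
        have "card J \<le> card (\<Union>(A ` J))" using hall that(1) by blast
        moreover have "card (\<Union>(A ` J)) \<noteq> card J" using no_tight_set that by blast
        ultimately show ?thesis by simp
      qed
      obtain i where i: "i \<in> I" using False by blast
      then have "1 \<le> card (A i)" using hall[rule_format, of "{i}"] by simp
      then obtain x where x: "x \<in> A i" by (metis card.empty ex_in_conv not_one_le_zero)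
      have "\<forall>j\<in>I - {i}. finite (A j - {x})" using fin(2) by blast
      then obtain g where "inj_on g (I - {i})" "\<forall>j\<in>I - {i}. g j \<in> A j - {x}"
        using less.hyps[OF card_Diff1_less[OF fin(1) i] _ _ hall_condition_remove_point[OF slack i]]
          fin(1) by blast
      then show ?thesis using i x
        by (intro sdr_combine[where K = "{i}" and f = "\<lambda>_. x" and X = "{x}"]) auto
    qed simp
  qed
qed

lemma has_perfect_matching_if_hall:
  assumes fin: "finite U" "finite W" and "card U = card W"
    and hall: "\<And>S. S \<subseteq> U \<Longrightarrow> card S \<le> card {w \<in> W. \<exists>u\<in>S. E u w}"
  shows "has_perfect_matching E U W"
proof -
  define A where "A u = {w \<in> W. E u w}" for u
  have "\<Union>(A ` S) = {w \<in> W. \<exists>u\<in>S. E u w}" for S unfolding A_def by auto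
  then have "\<forall>S\<subseteq>U. card S \<le> card (\<Union>(A ` S))" using hall by presburger
  moreover have "\<forall>u\<in>U. finite (A u)" using fin(2) by (simp add: A_def)
  ultimately obtain f where f: "inj_on f U" "\<forall>u\<in>U. f u \<in> A u"
    using hall_marriage[OF fin(1)] by metis
  have "f ` U \<subseteq> W" using f(2) by (auto simp: A_def)
  moreover have "card (f ` U) = card W" using f(1) \<open>card U = card W\<close> by (simp add: card_image)
  ultimately have onto: "f ` U = W" using fin(2) by (simp add: card_subset_eq)
  show ?thesis unfolding has_perfect_matching_def
  proof (intro exI[of _ "(\<lambda>u. (u, f u)) ` U"] conjI ballI)
    show "(\<lambda>u. (u, f u)) ` U \<subseteq> {(u, w). u \<in> U \<and> w \<in> W \<and> E u w}" using f(2) by (auto simp: A_def)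
  next
    fix u assume "u \<in> U"
    then show "\<exists>!w. (u, w) \<in> (\<lambda>u. (u, f u)) ` U" by auto
  next
    fix w assume "w \<in> W"
    then obtain u where "u \<in> U" "w = f u" using onto by blast
    then show "\<exists>!u. (u, w) \<in> (\<lambda>u. (u, f u)) ` U" using f(1) by (auto simp: inj_on_def)
  qed
qed

lemma edges_between_eq_sum_deg_in:
  assumes "finite A" "finite B"
  shows "edges_between E A B = (\<Sum>a\<in>A. deg_in E a B)"
proof -
  have "{(a, b). a \<in> A \<and> b \<in> B \<and> E a b} = Sigma A (\<lambda>a. {b \<in> B. E a b})" by auto
  then show ?thesis using assms by (simp add: edges_between_def deg_in_def)
qed

lemma edges_between_commute:
  assumes "symp E"
  shows "edges_between E A B = edges_between E B A"
proof -
  have "{(b, a). b \<in> B \<and> a \<in> A \<and> E b a} = prod.swap ` {(a, b). a \<in> A \<and> b \<in> B \<and> E a b}"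
    using assms by (auto dest: sympD)
  then show ?thesis by (simp add: edges_between_def card_image)
qed

lemma edges_between_ge_min_degree:
  assumes "finite A" "finite B" "\<And>a. a \<in> A \<Longrightarrow> \<delta> \<le> real (deg_in E a B)"
  shows "real (card A) * \<delta> \<le> real (edges_between E A B)"
proof -
  have "real (card A) * \<delta> = (\<Sum>a\<in>A. \<delta>)" by simp
  also have "\<dots> \<le> (\<Sum>a\<in>A. real (deg_in E a B))" using assms(3) by (rule sum_mono)
  finally show ?thesis using assms(1,2) by (simp add: edges_between_eq_sum_deg_in)
qed

lemma small_pair_edge_bound:
  fixes n d \<alpha> \<theta> s t :: real
  assumes "0 < n" "0 \<le> d" "0 \<le> t" "t \<le> s" "s \<le> \<alpha> * n / 6" "0 \<le> \<theta>" "\<theta> \<le> \<alpha> * d / 6"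
  shows "d / n * s * t + \<theta> * sqrt (s * t) \<le> s * (\<alpha> * d / 3)"
proof -
  have "d / n * s * t \<le> d / n * s * (\<alpha> * n / 6)"
    using assms by (intro mult_left_mono) auto
  also have "\<dots> = s * (\<alpha> * d / 6)" using assms(1) by (simp add: field_simps)
  finally have "d / n * s * t \<le> s * (\<alpha> * d / 6)" .
  moreover have "sqrt (s * t) \<le> sqrt (s * s)" using assms(3,4) by (intro real_sqrt_le_mono mult_left_mono) auto
  then have "\<theta> * sqrt (s * t) \<le> s * (\<alpha> * d / 6)"
    using assms(3,4,6,7) mult_mono[of \<theta> "\<alpha> * d / 6" "sqrt (s * t)" s] by (simp add: mult.commute)
  ultimately show ?thesis by linarith
qed

lemma large_pair_edge_bound:
  fixes n d \<alpha> \<theta> a b :: real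
  assumes "0 < n" "0 \<le> d" "0 < \<alpha>" "\<alpha> * n / 6 < a" "\<alpha> * n / 6 < b" "\<theta> \<le> \<alpha> * d / 6"
  shows "\<theta> * sqrt (a * b) \<le> d / n * a * b"
proof -
  define q where "q = sqrt (a * b)"
  have pos: "0 < \<alpha> * n / 6" using assms(1,3) by simp
  then have "(\<alpha> * n / 6) * (\<alpha> * n / 6) \<le> a * b" using assms(4,5) by (intro mult_mono) auto
  then have "\<alpha> * n / 6 \<le> q" unfolding q_def using pos by (metis real_le_rsqrt power2_eq_square)
  have "\<theta> * q \<le> (\<alpha> * d / 6) * q" using assms(6) \<open>\<alpha> * n / 6 \<le> q\<close> pos by (intro mult_right_mono) auto
  also have "\<dots> = d / n * (\<alpha> * n / 6) * q" using assms(1) by (simp add: field_simps)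
  also have "\<dots> \<le> d / n * q * q" using \<open>\<alpha> * n / 6 \<le> q\<close> pos assms(1,2) by (intro mult_right_mono mult_left_mono) auto
  also have "\<dots> = d / n * a * b" unfolding q_def using pos assms(4,5) by simp
  finally show ?thesis unfolding q_def .
qed

lemma expander_threshold:
  fixes \<alpha> d :: real
  assumes "0 < \<alpha>" "144 / \<alpha>\<^sup>2 \<le> d"
  shows "2 * sqrt (d - 1) \<le> \<alpha> * d / 6"
proof -
  have "144 \<le> \<alpha>\<^sup>2 * d" using assms by (simp add: divide_le_eq mult.commute)
  then have "0 < \<alpha>\<^sup>2 * d" by linarith
  then have "0 \<le> d" using assms(1) by (simp add: zero_less_mult_iff)
  have "144 * d \<le> (\<alpha>\<^sup>2 * d) * d" using \<open>144 \<le> \<alpha>\<^sup>2 * d\<close> \<open>0 \<le> d\<close> by (rule mult_right_mono)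
  then have "sqrt (144 * d) \<le> sqrt ((\<alpha> * d)\<^sup>2)" by (simp add: power2_eq_square mult_ac)
  then have "12 * sqrt d \<le> \<alpha> * d" using assms(1) \<open>0 \<le> d\<close> by (simp add: real_sqrt_mult)
  moreover have "sqrt (d - 1) \<le> sqrt d" by simp
  ultimately show ?thesis by linarith
qed

text \<open>\<open>\<theta>\<close> plays the role of \<open>\<lambda> = 2\<surd>(d - 1)\<close>; only \<open>\<theta> \<le> \<alpha>d/6\<close> is used.\<close>

locale dense_expander_pair =
  fixes E :: "'a \<Rightarrow> 'a \<Rightarrow> bool" and U W :: "'a set"
    and n d :: nat and \<alpha> \<theta> :: real
  assumes symp: "symp E"
    and finite: "finite U" "finite W"
    and card_U: "real (card U) = \<alpha> * real n" and card_W: "real (card W) = \<alpha> * real n"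
    and alpha_pos: "0 < \<alpha>" and d_pos: "0 < d"
    and theta: "0 \<le> \<theta>" "\<theta> \<le> \<alpha> * real d / 6"
    and mixing: "\<And>A B. A \<subseteq> U \<Longrightarrow> B \<subseteq> W \<Longrightarrow> A \<noteq> {} \<Longrightarrow> B \<noteq> {} \<Longrightarrow>
       \<bar>real (edges_between E A B) - real d / real n * real (card A) * real (card B)\<bar>
         < \<theta> * sqrt (real (card A) * real (card B))"
    and deg_U: "\<And>u. u \<in> U \<Longrightarrow> \<alpha> * real d / 3 \<le> real (deg_in E u W)"
    and deg_W: "\<And>w. w \<in> W \<Longrightarrow> \<alpha> * real d / 3 \<le> real (deg_in E w U)"
begin

lemma n_pos_if_nonempty:
  assumes "X \<subseteq> U \<or> X \<subseteq> W" "X \<noteq> {}"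
  shows "0 < n"
proof -
  have "0 < card U \<or> 0 < card W" using assms finite by (auto simp: card_gt_0_iff finite_subset)
  then show ?thesis using card_U card_W by (auto intro: Nat.gr0I)
qed

lemma mixing_upper:
  assumes "X \<subseteq> U \<and> Y \<subseteq> W \<or> X \<subseteq> W \<and> Y \<subseteq> U" "X \<noteq> {}" "Y \<noteq> {}"
  shows "real (edges_between E X Y)
    < real d / real n * real (card X) * real (card Y) + \<theta> * sqrt (real (card X) * real (card Y))"
proof (cases "X \<subseteq> U \<and> Y \<subseteq> W")
  case True
  then show ?thesis using mixing[of X Y] assms(2,3) by (simp add: abs_less_iff)
next
  case False
  then have "\<bar>real (edges_between E Y X) - real d / real n * real (card Y) * real (card X)\<bar>
      < \<theta> * sqrt (real (card Y) * real (card X))"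
    using assms by (intro mixing) auto
  then show ?thesis by (simp add: edges_between_commute[OF symp, of X] mult_ac abs_less_iff)
qed

lemma small_pair_has_low_degree_vertex:
  assumes sides: "X \<subseteq> U \<and> Y \<subseteq> W \<or> X \<subseteq> W \<and> Y \<subseteq> U"
    and "X \<noteq> {}" "card Y \<le> card X" "real (card X) \<le> \<alpha> * real n / 6"
  shows "\<exists>x\<in>X. real (deg_in E x Y) < \<alpha> * real d / 3"
proof (rule ccontr)
  assume "\<not> ?thesis"
  then have dense: "\<alpha> * real d / 3 \<le> real (deg_in E x Y)" if "x \<in> X" for x
    using that by force
  have "0 < n" using n_pos_if_nonempty sides \<open>X \<noteq> {}\<close> by blast
  have fin: "finite X" "finite Y" using sides finite finite_subset by blast+
  have many: "real (card X) * (\<alpha> * real d / 3) \<le> real (edges_between E X Y)"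
    using fin dense by (rule edges_between_ge_min_degree)
  moreover have "0 < real (card X) * (\<alpha> * real d / 3)"
    using \<open>X \<noteq> {}\<close> fin alpha_pos d_pos by (simp add: card_gt_0_iff)
  ultimately have "Y \<noteq> {}" by (auto simp: edges_between_def)
  then have "real (edges_between E X Y)
      < real d / real n * real (card X) * real (card Y) + \<theta> * sqrt (real (card X) * real (card Y))"
    using sides \<open>X \<noteq> {}\<close> by (intro mixing_upper)
  also have "\<dots> \<le> real (card X) * (\<alpha> * real d / 3)"
    using \<open>0 < n\<close> assms(3,4) theta by (intro small_pair_edge_bound) auto
  finally show False using many by simp
qed

lemma large_pair_has_edge:
  assumes "X \<subseteq> U" "Y \<subseteq> W" "\<alpha> * real n / 6 < real (card X)" "\<alpha> * real n / 6 < real (card Y)"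
  shows "0 < edges_between E X Y"
proof -
  have "0 \<le> \<alpha> * real n" using alpha_pos by simp
  then have "X \<noteq> {}" "Y \<noteq> {}" using assms(3,4) by auto
  then have "0 < n" using n_pos_if_nonempty assms(1) by blast
  have "\<theta> * sqrt (real (card X) * real (card Y)) \<le> real d / real n * real (card X) * real (card Y)"
    using \<open>0 < n\<close> alpha_pos assms(3,4) theta by (intro large_pair_edge_bound) auto
  then show ?thesis
    using mixing[OF assms(1,2) \<open>X \<noteq> {}\<close> \<open>Y \<noteq> {}\<close>] by (auto simp: abs_less_iff)
qed

lemma hall_condition:
  assumes "S \<subseteq> U"
  shows "card S \<le> card {w \<in> W. \<exists>u\<in>S. E u w}"
proof (rule ccontr)
  define N where "N = {w \<in> W. \<exists>u\<in>S. E u w}"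
  assume "\<not> card S \<le> card {w \<in> W. \<exists>u\<in>S. E u w}"
  then have "card N < card S" unfolding N_def by simp
  have "N \<subseteq> W" unfolding N_def by auto
  have "card U = card W" using card_U card_W by simp
  moreover have "card S \<le> card U" using finite(1) assms by (rule card_mono)
  ultimately have "card (U - S) < card (W - N)"
    using \<open>card N < card S\<close> finite assms \<open>N \<subseteq> W\<close> by (simp add: card_Diff_subset finite_subset)
  have dense_S: "\<alpha> * real d / 3 \<le> real (deg_in E u N)" if "u \<in> S" for u
  proof -
    have "{w \<in> N. E u w} = {w \<in> W. E u w}" using that unfolding N_def by auto
    then show ?thesis using deg_U[of u] that assms by (auto simp: deg_in_def)
  qed
  have dense_W_N: "\<alpha> * real d / 3 \<le> real (deg_in E w (U - S))" if "w \<in> W - N" for w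
  proof -
    have "{u \<in> U - S. E w u} = {u \<in> U. E w u}" using that symp unfolding N_def by (auto dest: sympD)
    then show ?thesis using deg_W[of w] that by (auto simp: deg_in_def)
  qed
  consider "real (card S) \<le> \<alpha> * real n / 6" | "real (card (W - N)) \<le> \<alpha> * real n / 6"
    | "\<alpha> * real n / 6 < real (card S)" "\<alpha> * real n / 6 < real (card (W - N))" by linarith
  then show False
  proof cases
    case 1
    have "S \<noteq> {}" using \<open>card N < card S\<close> by auto
    with 1 obtain u where "u \<in> S" "real (deg_in E u N) < \<alpha> * real d / 3"
      using small_pair_has_low_degree_vertex[of S N] assms \<open>N \<subseteq> W\<close> \<open>card N < card S\<close> by auto
    then show False using dense_S by (meson not_le)
  next
    case 2
    have "W - N \<noteq> {}" using \<open>card (U - S) < card (W - N)\<close> by (metis card.empty less_nat_zero_code)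
    with 2 obtain w where "w \<in> W - N" "real (deg_in E w (U - S)) < \<alpha> * real d / 3"
      using small_pair_has_low_degree_vertex[of "W - N" "U - S"] \<open>card (U - S) < card (W - N)\<close> by auto
    then show False using dense_W_N by (meson not_le)
  next
    case 3
    then have "0 < edges_between E S (W - N)" using assms by (intro large_pair_has_edge) auto
    moreover have "{(u, w). u \<in> S \<and> w \<in> W - N \<and> E u w} = {}" unfolding N_def by auto
    ultimately show False unfolding edges_between_def by (metis card.empty less_irrefl)
  qed
qed

end

theorem proposition3p11:
  fixes E :: "'a \<Rightarrow> 'a \<Rightarrow> bool" and V1 V2 U W :: "'a set"
    and n d :: nat and \<alpha> :: real
  assumes alpha: "0 < \<alpha>" "\<alpha> \<le> 1"
    and d_ge: "real d \<ge> 144 / \<alpha>\<^sup>2"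
    and G: "bipartite_regular E V1 V2 d"
    and sizes: "card V1 = n" "card V2 = n"
    and expander: "\<And>A B. A \<subseteq> V1 \<Longrightarrow> B \<subseteq> V2 \<Longrightarrow> A \<noteq> {} \<Longrightarrow> B \<noteq> {} \<Longrightarrow>
       \<bar>real (edges_between E A B) - real d / real n * real (card A) * real (card B)\<bar>
         < 2 * sqrt (real d - 1) * sqrt (real (card A) * real (card B))"
    and UW: "U \<subseteq> V1" "W \<subseteq> V2"
    and card_UW: "real (card U) = \<alpha> * real n" "real (card W) = \<alpha> * real n"
    and degW: "\<And>w. w \<in> W \<Longrightarrow> real (deg_in E w U) \<ge> \<alpha> * real d / 3"
    and degU: "\<And>u. u \<in> U \<Longrightarrow> real (deg_in E u W) \<ge> \<alpha> * real d / 3"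
  shows "has_perfect_matching E U W"
proof -
  have "finite V1" "finite V2" "symp E" using G by (auto simp: bipartite_regular_def symp_def)
  then have fin: "finite U" "finite W" using UW finite_subset by auto
  have "0 < 144 / \<alpha>\<^sup>2" using alpha(1) by simp
  then have "0 < d" using d_ge by linarith
  interpret dense_expander_pair E U W n d \<alpha> "2 * sqrt (real d - 1)"
  proof unfold_locales
    fix A B assume "A \<subseteq> U" "B \<subseteq> W" "A \<noteq> {}" "B \<noteq> {}"
    then show "\<bar>real (edges_between E A B) - real d / real n * real (card A) * real (card B)\<bar>
        < 2 * sqrt (real d - 1) * sqrt (real (card A) * real (card B))"
      using UW by (intro expander) auto
  next
    show "2 * sqrt (real d - 1) \<le> \<alpha> * real d / 6" using alpha(1) d_ge by (rule expander_threshold)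
  qed (use \<open>symp E\<close> fin card_UW alpha(1) \<open>0 < d\<close> degU degW in auto)
  show ?thesis
    using fin card_UW by (intro has_perfect_matching_if_hall hall_condition) auto
qed

end
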